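(* Let $p>2$ be a prime, $d\geq 2$ an integer with $d\mid p-1$, $f=(p-1)/d$, and $\omega$ a fixed generator of $\mathbb{F}_p^*$. Let $\theta=0$ if $f$ is even and $\theta=d/2$ if $f$ is odd. Let $\zeta\in\mathbb{C}$ be a primitive $p$-th root of unity and, for $i\in\mathbb{Z}/d\mathbb{Z}$, let $\eta_i=\sum_{k=0}^{f-1}\zeta^{\omega^{kd+i}}$. For $i,j\in\mathbb{Z}/d\mathbb{Z}$ let $(i,j)=\#\{(u,v):0\leq u,v\leq f-1,\ 1+\omega^{du+i}\equiv\omega^{dv+j}\pmod p\}$. For integers $k\geq 0$ and $0\leq\nu\leq d-1$ put $n(k,\nu)=\sum_{i=0}^{d-1}\eta_i^k\,\eta_{i+\nu}$ (indices mod $d$). Then for every $0\leq\nu\leq d-1$: \[ n(1,\nu)+f=p\,\delta_{\theta\nu},\qquad n(2,\nu)+f^2=p\,(\nu,\theta), \] \[ n(3,\nu)+f^3=p\sum_{i=0}^{d-1}(\nu,i)(i,\theta)+f\,\delta_{\theta0}\,[n(1,\nu)+f], \] \[ n(4,\nu)+f^4=p\sum_{i,j=0}^{d-1}(\nu,i)(i,j)(j,\theta)+f\,\delta_{\theta0}\,[n(2,\nu)+f^2]+f\,(0,\theta)\,[n(1,\nu)+f], \] and for every $k\geq 5$, \[ n(k,\nu)+f^k=p\sum_{i_2,\dots,i_{k-1}=0}^{d-1}(\nu,i_2)(i_2,i_3)\cdots(i_{k-1},\theta)+f\,\delta_{\theta0}\,[n(k-2,\nu)+f^{k-2}]+f\,(0,\theta)\,[n(k-3,\nu)+f^{k-3}]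 \] \[ \qquad+\sum_{j=4}^{k-1}f\Big[\sum_{i_2,\dots,i_{j-2}=0}^{d-1}(0,i_2)(i_2,i_3)\cdots(i_{j-2},\theta)\Big]\,[n(k-j,\nu)+f^{k-j}], \] where $\delta$ denotes the Kronecker delta.
   Context: Indices of $\eta_i$ and of the cyclotomic numbers $(i,j)$ are taken modulo $d$. For $j=4$ the inner sum is $\sum_{i_2=0}^{d-1}(0,i_2)(i_2,\theta)$. *)

theory Defs
  imports Complex_Main "HOL-Number_Theory.Number_Theory"
begin

definition eta :: "complex \<Rightarrow> nat \<Rightarrow> nat \<Rightarrow> nat \<Rightarrow> nat \<Rightarrow> complex" where
  "eta \<zeta> \<omega> d f i = (\<Sum>k<f. \<zeta> ^ (\<omega> ^ (k * d + i mod d)))"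

definition cyc :: "nat \<Rightarrow> nat \<Rightarrow> nat \<Rightarrow> nat \<Rightarrow> nat \<Rightarrow> nat \<Rightarrow> nat" where
  "cyc p \<omega> d f i j = card {(u, v). u < f \<and> v < f \<and>
      [1 + \<omega> ^ (d * u + i mod d) = \<omega> ^ (d * v + j mod d)] (mod p)}"

definition nsum :: "complex \<Rightarrow> nat \<Rightarrow> nat \<Rightarrow> nat \<Rightarrow> nat \<Rightarrow> nat \<Rightarrow> complex" where
  "nsum \<zeta> \<omega> d f k \<nu> = (\<Sum>i<d. eta \<zeta> \<omega> d f i ^ k * eta \<zeta> \<omega> d f (i + \<nu>))"

text \<open>chain m a b = sum over m intermediate indices i_1..i_m in {0..d-1} of
  (a,i_1)(i_1,i_2)...(i_m,b); chain 0 a b = (a,b).\<close>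
fun chain :: "nat \<Rightarrow> nat \<Rightarrow> nat \<Rightarrow> nat \<Rightarrow> nat \<Rightarrow> nat \<Rightarrow> nat \<Rightarrow> nat" where
  "chain p \<omega> d f 0 a b = cyc p \<omega> d f a b"
| "chain p \<omega> d f (Suc m) a b = (\<Sum>i<d. cyc p \<omega> d f a i * chain p \<omega> d f m i b)"

definition kdelta :: "nat \<Rightarrow> nat \<Rightarrow> complex" where
  "kdelta a b = (if a = b then 1 else 0)"

end

theory Submission
  imports Defs
begin

(* Since x \<mapsto> x t maps each cyclotomic class onto another one, and -1 lies in the class
   of index \<theta>, the Gaussian periods multiply as
     eta_i eta_(i+s) = f delta(\<theta>,s) + sum_j (s,j) eta_(i+j).
   Hence the shifted sums m(k,\<nu>) = n(k,\<nu>) + f^k satisfy m(0,.) = 0, m(1,.) = p delta(\<theta>,.) and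
     m(k+2) = C m(k+1) + f m(k,0) delta(\<theta>,.),
   where C is the matrix of cyclotomic numbers. Decomposing a solution of this recurrence
   according to the first use of the rank-one term gives
     m(n+1) = p C^n delta(\<theta>,.) + f sum_(i<n) (C^i delta(\<theta>,.))_0 m(n-1-i),
   and the entries of C^(r+1) delta(\<theta>,.) are the chains (a,i_1)(i_1,i_2)...(i_r,\<theta>). *)

section \<open>Recurrences with a delayed rank-one term\<close>

definition mat_vec :: "nat \<Rightarrow> (nat \<Rightarrow> nat \<Rightarrow> 'a::comm_semiring_1) \<Rightarrow> (nat \<Rightarrow> 'a) \<Rightarrow> nat \<Rightarrow> 'a" where
  "mat_vec d M x = (\<lambda>v. \<Sum>j<d. M v j * x j)"

fun lin_rec :: "nat \<Rightarrow> (nat \<Rightarrow> nat \<Rightarrow> 'a::comm_semiring_1) \<Rightarrow> 'a \<Rightarrow> (nat \<Rightarrow> 'a) \<Rightarrow> (nat \<Rightarrow> 'a) \<Rightarrow> nat \<Rightarrow> nat \<Rightarrow> 'a" where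
  "lin_rec d M F e u 0 = (\<lambda>_. 0)"
| "lin_rec d M F e u (Suc 0) = u"
| "lin_rec d M F e u (Suc (Suc k)) =
     (\<lambda>v. mat_vec d M (lin_rec d M F e u (Suc k)) v + F * lin_rec d M F e u k 0 * e v)"

lemma lin_rec_unique:
  assumes "0 < d"
    and x0: "\<And>v. v < d \<Longrightarrow> x 0 v = 0"
    and x1: "\<And>v. v < d \<Longrightarrow> x 1 v = u v"
    and x_rec: "\<And>k v. v < d \<Longrightarrow> x (k + 2) v = mat_vec d M (x (k + 1)) v + F * x k 0 * e v"
  shows "v < d \<Longrightarrow> x k v = lin_rec d M F e u k v"
proof (induction k arbitrary: v rule: induct_nat_012)
  case (ge2 k)
  then have "x (k + 2) v = mat_vec d M (lin_rec d M F e u (Suc k)) v + F * lin_rec d M F e u k 0 * e v"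
    using x_rec \<open>0 < d\<close> by (simp add: mat_vec_def)
  then show ?case
    by (simp add: numeral_2_eq_2)
qed (use x0 x1 in simp_all)

text \<open>If the first step uses the rank-one term, the recursion restarts from \<open>e\<close>.\<close>
lemma lin_rec_Suc_Suc:
  "lin_rec d M F e u (Suc (Suc k)) v
     = lin_rec d M F e (mat_vec d M u) (Suc k) v + F * u 0 * lin_rec d M F e e k v"
proof (induction k arbitrary: v rule: induct_nat_012)
  case (ge2 k)
  let ?x = "lin_rec d M F e"
  have "mat_vec d M (?x u (Suc (Suc (Suc k)))) v
        = mat_vec d M (?x (mat_vec d M u) (Suc (Suc k))) v + F * u 0 * mat_vec d M (?x e (Suc k)) v"
    using ge2.IH(2) by (simp add: mat_vec_def sum.distrib sum_distrib_left algebra_simps)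
  then show ?case
    using ge2.IH(1)[of 0] by (simp add: algebra_simps)
qed (simp_all add: mat_vec_def sum_distrib_left algebra_simps)

lemma lin_rec_closed_form:
  "lin_rec d M F e u (Suc n) v
     = (mat_vec d M ^^ n) u v + F * (\<Sum>i<n. (mat_vec d M ^^ i) u 0 * lin_rec d M F e e (n - 1 - i) v)"
proof (induction n arbitrary: u)
  case (Suc n)
  show ?case
    unfolding lin_rec_Suc_Suc Suc.IH sum.lessThan_Suc_shift
    by (simp add: funpow_Suc_right algebra_simps del: funpow.simps)
qed simp

corollary lin_rec_renewal:
  assumes "0 < d"
    and x0: "\<And>v. v < d \<Longrightarrow> x 0 v = 0"
    and x1: "\<And>v. v < d \<Longrightarrow> x 1 v = P * e v"
    and x_rec: "\<And>k v. v < d \<Longrightarrow> x (k + 2) v = mat_vec d M (x (k + 1)) v + F * x k 0 * e v"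
    and "v < d"
  shows "x (Suc n) v = P * (mat_vec d M ^^ n) e v + F * (\<Sum>i<n. (mat_vec d M ^^ i) e 0 * x (n - 1 - i) v)"
proof -
  let ?y = "lin_rec d M F e e"
  have x_eq: "x k v = lin_rec d M F e (\<lambda>v. P * e v) k v" if "v < d" for k v
    using lin_rec_unique[OF \<open>0 < d\<close> x0 x1 x_rec] that by blast
  have "P * ?y k v = lin_rec d M F e (\<lambda>v. P * e v) k v" if "v < d" for k v
    using \<open>0 < d\<close> that
    by (intro lin_rec_unique) (simp_all add: mat_vec_def sum_distrib_left algebra_simps)
  with x_eq have x_scaled: "x k v = P * ?y k v" if "v < d" for k v
    using that by simp
  show ?thesis
    using \<open>v < d\<close> \<open>0 < d\<close>
    by (simp add: x_scaled lin_rec_closed_form algebra_simps sum_distrib_left)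
qed

lemma sum_lessThan_shift_mod:
  assumes "0 < (d::nat)"
  shows "(\<Sum>i<d. g ((i + v) mod d)) = (\<Sum>i<d. g i)"
proof (rule sum.reindex_bij_betw)
  have "inj_on (\<lambda>i. (i + v) mod d) {..<d}"
  proof
    fix a b assume "a \<in> {..<d}" "b \<in> {..<d}" "(a + v) mod d = (b + v) mod d"
    then have "[a + v = b + v] (mod d)" "a < d" "b < d"
      by (auto simp: cong_def)
    then show "a = b"
      by (simp add: cong_add_rcancel_nat cong_less_modulus_unique_nat)
  qed
  then show "bij_betw (\<lambda>i. (i + v) mod d) {..<d} {..<d}"
    using assms by (simp add: bij_betw_def endo_inj_surj image_subsetI)
qed

section \<open>Cyclotomic classes\<close>

locale cyclotomic_classes =
  fixes p w d f :: nat
  assumes prime: "prime p" and p_gt_2: "2 < p"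
    and generator: "ord p w = p - 1"
    and d_pos: "0 < d" and d_dvd: "d dvd p - 1" and f_def: "f = (p - 1) div d"
begin

lemma p_minus_1_eq: "p - 1 = d * f"
  using d_dvd f_def by simp

lemma p_eq: "p = d * f + 1"
  using p_minus_1_eq p_gt_2 by simp

lemma f_pos: "0 < f"
  using p_minus_1_eq p_gt_2 by (cases f) auto

lemma coprime_p_w: "coprime p w"
  using generator p_gt_2 ord_eq_0[of p w] by simp

lemma power_mod_eq_iff: "w ^ a mod p = w ^ b mod p \<longleftrightarrow> [a = b] (mod p - 1)"
  using order_divides_expdiff[OF coprime_p_w, of a b] generator by (simp add: cong_def)

lemma powers_mod_eq: "(\<lambda>e. w ^ e mod p) ` {..<p - 1} = {0<..<p}"
proof -
  have "residue_primroot p w"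
    using prime coprime_p_w generator by (simp add: residue_primroot_def totient_prime prime_gt_0_nat)
  then show ?thesis
    using residue_primroot_is_generator[of p w] prime p_gt_2
    by (simp add: bij_betw_def totient_prime totatives_prime)
qed

lemma power_mod_pos: "0 < w ^ e mod p"
proof -
  have "w ^ e mod p = w ^ (e mod (p - 1)) mod p"
    by (simp add: power_mod_eq_iff cong_def)
  also have "\<dots> \<in> {0<..<p}"
    using powers_mod_eq p_gt_2 by auto
  finally show ?thesis by simp
qed

text \<open>The cyclotomic class \<open>\<omega>\<^sup>r H\<close>, \<open>H\<close> the subgroup of \<open>d\<close>-th powers in \<open>(\<int>/p\<int>)\<^sup>*\<close>,
  with its elements represented by their residues in \<open>{1..p-1}\<close>.\<close>
definition coset :: "nat \<Rightarrow> nat set" where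
  "coset r = (\<lambda>u. w ^ (d * u + r) mod p) ` {..<f}"

lemma finite_coset [simp]: "finite (coset r)"
  by (simp add: coset_def)

lemma coset_subset: "coset r \<subseteq> {0<..<p}"
  using power_mod_pos prime prime_gt_0_nat by (auto simp: coset_def)

lemma coset_exponent_less: "r < d \<Longrightarrow> u < f \<Longrightarrow> d * u + r < p - 1"
proof -
  assume "r < d" "u < f"
  then have "d * u + r < d * Suc u" by simp
  also have "\<dots> \<le> d * f" using \<open>u < f\<close> by (intro mult_le_mono2) simp
  finally show ?thesis by (simp only: p_minus_1_eq)
qed

lemma inj_on_coset_param:
  assumes "r < d"
  shows "inj_on (\<lambda>u. w ^ (d * u + r) mod p) {..<f}"
proof
  fix u v assume "u \<in> {..<f}" "v \<in> {..<f}" and eq: "w ^ (d * u + r) mod p = w ^ (d * v + r) mod p"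
  then have "d * u + r < p - 1" "d * v + r < p - 1"
    using assms coset_exponent_less by auto
  with eq show "u = v"
    using d_pos by (simp add: power_mod_eq_iff cong_def)
qed

lemma card_coset: "r < d \<Longrightarrow> card (coset r) = f"
  by (simp add: coset_def card_image inj_on_coset_param)

lemma mem_coset_iff:
  assumes "r < d"
  shows "x \<in> coset r \<longleftrightarrow> (\<exists>e. e mod d = r \<and> x = w ^ e mod p)"
proof
  assume "x \<in> coset r"
  then obtain u where "x = w ^ (d * u + r) mod p"
    by (auto simp: coset_def)
  with assms show "\<exists>e. e mod d = r \<and> x = w ^ e mod p"
    by (intro exI[of _ "d * u + r"]) simp
next
  assume "\<exists>e. e mod d = r \<and> x = w ^ e mod p"
  then obtain e where e: "e mod d = r" "x = w ^ e mod p" by blast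
  define e' where "e' = e mod (p - 1)"
  have "e' mod d = r"
    using e(1) d_dvd by (simp add: e'_def mod_mod_cancel)
  have "e' < d * f"
    using p_gt_2 unfolding e'_def p_minus_1_eq[symmetric] by simp
  then have "e' div d < f"
    by (simp add: div_less_iff_less_mult mult.commute d_pos)
  have "d * (e' div d) + r = e'"
    using \<open>e' mod d = r\<close> by (metis mult_div_mod_eq)
  then have "x = w ^ (d * (e' div d) + r) mod p"
    using e(2) by (simp add: e'_def power_mod_eq_iff cong_def)
  with \<open>e' div d < f\<close> show "x \<in> coset r"
    by (auto simp: coset_def)
qed

lemma cosets_disjoint:
  assumes "r < d" "s < d" "x \<in> coset r" "x \<in> coset s"
  shows "r = s"
proof -
  obtain a b where "a mod d = r" "b mod d = s" "w ^ a mod p = w ^ b mod p"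
    using assms(3,4) mem_coset_iff[OF assms(1)] mem_coset_iff[OF assms(2)] by auto
  then have "[a = b] (mod d)"
    using cong_dvd_modulus_nat[OF _ d_dvd] by (simp add: power_mod_eq_iff)
  with \<open>a mod d = r\<close> \<open>b mod d = s\<close> show ?thesis
    by (simp add: cong_def)
qed

lemma ex_coset:
  assumes "x \<in> {0<..<p}"
  shows "\<exists>r<d. x \<in> coset r"
proof -
  obtain e where "x = w ^ e mod p"
    using assms powers_mod_eq by blast
  moreover have "e mod d < d"
    using d_pos by simp
  ultimately show ?thesis
    using mem_coset_iff by blast
qed

lemma mult_mem_coset:
  assumes "r < d" "s < d" "x \<in> coset r" "y \<in> coset s"
  shows "x * y mod p \<in> coset ((r + s) mod d)"
proof -
  obtain a b where "a mod d = r" "x = w ^ a mod p" "b mod d = s" "y = w ^ b mod p"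
    using assms(3,4) mem_coset_iff[OF assms(1)] mem_coset_iff[OF assms(2)] by auto
  then have "(a + b) mod d = (r + s) mod d" "x * y mod p = w ^ (a + b) mod p"
    using mod_add_eq[of a d b] by (simp_all add: power_add mod_mult_eq)
  then show ?thesis
    using d_pos mem_coset_iff by auto
qed

lemma bij_betw_mult_coset:
  assumes "r < d" "s < d" "x \<in> coset r"
  shows "bij_betw (\<lambda>t. x * t mod p) (coset s) (coset ((r + s) mod d))"
proof -
  have "x \<in> {0<..<p}"
    using assms(3) coset_subset by blast
  then have "\<not> p dvd x"
    by (auto dest: dvd_imp_le)
  then have "coprime x p"
    using prime prime_imp_coprime[of p x] coprime_commute by blast
  have inj: "inj_on (\<lambda>t. x * t mod p) (coset s)"
  proof
    fix a b assume "a \<in> coset s" "b \<in> coset s" "x * a mod p = x * b mod p"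
    then have "[a = b] (mod p)" "a < p" "b < p"
      using cong_mult_lcancel_nat[OF \<open>coprime x p\<close>] coset_subset[of s] by (auto simp: cong_def)
    then show "a = b"
      by (simp add: cong_less_modulus_unique_nat)
  qed
  moreover have "(\<lambda>t. x * t mod p) ` coset s = coset ((r + s) mod d)"
    using assms d_pos mult_mem_coset
    by (intro card_subset_eq) (auto simp: card_image[OF inj] card_coset)
  ultimately show ?thesis
    by (simp add: bij_betw_def)
qed

text \<open>Since \<open>\<omega>\<close> generates \<open>(\<int>/p\<int>)\<^sup>*\<close>, we have \<open>-1 = \<omega>\<^bsup>(p-1)/2\<^esup>\<close>.\<close>
definition neg_one_class :: nat where
  "neg_one_class = ((p - 1) div 2) mod d"

lemma neg_one_class_less: "neg_one_class < d"
  using d_pos by (simp add: neg_one_class_def)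

lemma neg_one_class_eq: "neg_one_class = (if even f then 0 else d div 2)"
proof (cases "even f")
  case True
  then obtain g where "f = 2 * g" by blast
  then have "(p - 1) div 2 = d * g"
    unfolding p_minus_1_eq by simp
  with True show ?thesis
    by (simp add: neg_one_class_def)
next
  case False
  have "odd p"
    using prime p_gt_2 prime_odd_nat by blast
  then have "even (d * f)"
    using p_gt_2 by (simp flip: p_minus_1_eq)
  with False obtain c where c: "d = 2 * c"
    by auto
  obtain g where "f = 2 * g + 1"
    using False oddE by blast
  then have "(p - 1) div 2 = d * g + c"
    unfolding p_minus_1_eq c by (simp add: algebra_simps)
  moreover have "c < d"
    using c d_pos by simp
  moreover have "d div 2 = c"
    using c by simp
  ultimately show ?thesis
    using False by (simp add: neg_one_class_def)
qed

lemma neg_one_mem_coset: "p - 1 \<in> coset neg_one_class"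
proof -
  define h where "h = (p - 1) div 2"
  define y where "y = w ^ h mod p"
  have "even (p - 1)"
    using prime p_gt_2 prime_odd_nat by fastforce
  then have "h + h = p - 1"
    unfolding h_def by presburger
  then have "[y * y = w ^ (p - 1)] (mod p)"
    by (simp add: y_def cong_def mod_mult_eq flip: power_add)
  also have "[w ^ (p - 1) = 1] (mod p)"
    using ord[of w p] generator by simp
  finally have "[int y * int y = 1] (mod int p)"
    using cong_int_iff[of "y * y" 1 p] by simp
  moreover have "0 < y" "y < p"
    using power_mod_pos prime prime_gt_0_nat by (auto simp: y_def)
  moreover have "\<not> [y = 1] (mod p)"
  proof
    assume "[y = 1] (mod p)"
    then have "w ^ h mod p = w ^ 0 mod p"
      by (simp add: y_def cong_def)
    then have "[h = 0] (mod p - 1)"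
      by (simp only: power_mod_eq_iff)
    moreover have "0 < h" "h < p - 1"
      using p_gt_2 by (auto simp: h_def)
    ultimately show False
      by (simp add: cong_def)
  qed
  ultimately have "[int y = - 1] (mod int p)"
    using cong_square[of "int p" "int y"] prime cong_int_iff[of y 1 p] by simp
  then have "int p dvd int (y + 1)"
    by (simp add: cong_iff_dvd_diff add.commute)
  then have "p dvd y + 1"
    by (simp only: of_nat_dvd_iff)
  with \<open>y < p\<close> have "y = p - 1"
    by (auto dest: dvd_imp_le)
  then show ?thesis
    using d_pos mem_coset_iff by (auto simp: y_def h_def neg_one_class_def)
qed

lemma neg_one_mem_coset_iff: "s < d \<Longrightarrow> p - 1 \<in> coset s \<longleftrightarrow> s = neg_one_class"
  using cosets_disjoint neg_one_mem_coset neg_one_class_less by blast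

definition cyc_set :: "nat \<Rightarrow> nat \<Rightarrow> nat set" where
  "cyc_set i j = {t \<in> coset i. (1 + t) mod p \<in> coset j}"

lemma finite_cyc_set [simp]: "finite (cyc_set i j)"
  by (simp add: cyc_set_def)

lemma cyc_eq_card_cyc_set:
  assumes "i < d" "j < d"
  shows "cyc p w d f i j = card (cyc_set i j)"
proof -
  define S where "S = {(u, v). u < f \<and> v < f \<and> [1 + w ^ (d * u + i) = w ^ (d * v + j)] (mod p)}"
  define U where "U = {u. u < f \<and> (1 + w ^ (d * u + i)) mod p \<in> coset j}"
  have "v = v'" if "(u, v) \<in> S" "(u, v') \<in> S" for u v v'
  proof -
    have "w ^ (d * v + j) mod p = w ^ (d * v' + j) mod p" "v \<in> {..<f}" "v' \<in> {..<f}"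
      using that by (auto simp: S_def cong_def)
    then show "v = v'"
      using inj_on_coset_param[OF assms(2)] by (auto dest: inj_onD)
  qed
  then have "inj_on fst S"
    unfolding inj_on_def by (metis prod.collapse)
  moreover have "fst ` S = U"
    by (force simp: S_def U_def coset_def cong_def)
  moreover have "cyc_set i j = (\<lambda>u. w ^ (d * u + i) mod p) ` U"
    by (auto simp: cyc_set_def U_def coset_def mod_Suc_eq)
  moreover have "inj_on (\<lambda>u. w ^ (d * u + i) mod p) U"
    using inj_on_coset_param[OF assms(1)] by (rule inj_on_subset) (auto simp: U_def)
  ultimately have "card (cyc_set i j) = card S"
    by (metis card_image)
  with assms show ?thesis
    by (simp add: cyc_def S_def)
qed

lemma cyc_sets_disjoint: "i < d \<Longrightarrow> j < d \<Longrightarrow> i \<noteq> j \<Longrightarrow> cyc_set s i \<inter> cyc_set s j = {}"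
  using cosets_disjoint by (auto simp: cyc_set_def)

lemma coset_minus_neg_one_eq:
  assumes "s < d"
  shows "coset s - {p - 1} = (\<Union>j<d. cyc_set s j)"
proof
  show "coset s - {p - 1} \<subseteq> (\<Union>j<d. cyc_set s j)"
  proof
    fix t assume t: "t \<in> coset s - {p - 1}"
    then have "1 + t \<in> {0<..<p}"
      using coset_subset[of s] by fastforce
    then obtain j where "j < d" "1 + t \<in> coset j"
      using ex_coset by blast
    with t \<open>1 + t \<in> {0<..<p}\<close> show "t \<in> (\<Union>j<d. cyc_set s j)"
      by (auto simp: cyc_set_def)
  qed
  show "(\<Union>j<d. cyc_set s j) \<subseteq> coset s - {p - 1}"
    using coset_subset prime_gt_0_nat[OF prime] by (fastforce simp: cyc_set_def)
qed

lemma sum_cyc_row: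
  assumes "s < d"
  shows "(\<Sum>j<d. cyc p w d f s j) + (if s = neg_one_class then 1 else 0) = f"
proof -
  have "(\<Sum>j<d. cyc p w d f s j) = card (\<Union>j<d. cyc_set s j)"
    using assms cyc_sets_disjoint by (simp add: cyc_eq_card_cyc_set card_UN_disjoint)
  also have "\<dots> = card (coset s) - (if s = neg_one_class then 1 else 0)"
    using assms neg_one_mem_coset_iff by (simp add: coset_minus_neg_one_eq[symmetric] card_Diff_singleton_if)
  finally show ?thesis
    using assms f_pos card_coset by simp
qed

abbreviation cyc_matrix :: "nat \<Rightarrow> nat \<Rightarrow> complex" where
  "cyc_matrix i j \<equiv> of_nat (cyc p w d f i j)"

lemma chain_eq_mat_vec_power:
  "of_nat (chain p w d f r a neg_one_class) = (mat_vec d cyc_matrix ^^ Suc r) (kdelta neg_one_class) a"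
proof (induction r arbitrary: a)
  case 0
  have "(\<Sum>j<d. cyc_matrix a j * kdelta neg_one_class j) = cyc_matrix a neg_one_class"
    using neg_one_class_less by (simp add: kdelta_def if_distrib[of "(*) _"] cong: if_cong)
  then show ?case
    by (simp add: mat_vec_def)
next
  case (Suc r)
  then show ?case
    by (simp add: mat_vec_def)
qed

end

section \<open>Gaussian periods\<close>

locale gaussian_periods = cyclotomic_classes +
  fixes \<zeta> :: complex
  assumes zeta_pow_p: "\<zeta> ^ p = 1" and zeta_ne_1: "\<zeta> \<noteq> 1"
begin

abbreviation "\<eta> \<equiv> eta \<zeta> w d f"

lemma zeta_power_mod: "\<zeta> ^ (n mod p) = \<zeta> ^ n"
proof -
  have "\<zeta> ^ n = \<zeta> ^ (p * (n div p) + n mod p)"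
    by simp
  also have "\<dots> = (\<zeta> ^ p) ^ (n div p) * \<zeta> ^ (n mod p)"
    by (simp only: power_add power_mult)
  finally show ?thesis
    by (simp add: zeta_pow_p)
qed

lemma eta_eq_sum_coset: "\<eta> i = (\<Sum>x\<in>coset (i mod d). \<zeta> ^ x)"
proof -
  have "\<eta> i = (\<Sum>u<f. \<zeta> ^ (w ^ (d * u + i mod d) mod p))"
    by (simp add: eta_def zeta_power_mod mult.commute)
  also have "\<dots> = (\<Sum>x\<in>coset (i mod d). \<zeta> ^ x)"
    using d_pos by (simp add: coset_def sum.reindex inj_on_coset_param)
  finally show ?thesis .
qed

lemma sum_zeta_units: "(\<Sum>x\<in>{0<..<p}. \<zeta> ^ x) = -1"
proof -
  have "{..<p} = insert 0 {0<..<p}"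
    using p_gt_2 by auto
  moreover have "(\<Sum>x<p. \<zeta> ^ x) = 0"
    using zeta_ne_1 by (simp add: geometric_sum zeta_pow_p)
  ultimately show ?thesis
    by (simp add: eq_neg_iff_add_eq_0 add.commute)
qed

lemma sum_eta: "(\<Sum>i<d. \<eta> (i + v)) = -1"
proof -
  have "(\<Sum>i<d. \<eta> (i + v)) = (\<Sum>i<d. \<Sum>x\<in>coset i. \<zeta> ^ x)"
    using sum_lessThan_shift_mod[OF d_pos, of "\<lambda>i. \<Sum>x\<in>coset i. \<zeta> ^ x"]
    by (simp add: eta_eq_sum_coset)
  also have "\<dots> = (\<Sum>x\<in>(\<Union>i<d. coset i). \<zeta> ^ x)"
    using cosets_disjoint by (intro sum.UNION_disjoint[symmetric]) auto
  also have "(\<Union>i<d. coset i) = {0<..<p}"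
    using coset_subset ex_coset by blast
  finally show ?thesis
    by (simp add: sum_zeta_units)
qed

lemma sum_coset_times:
  assumes "r < d" "j < d" "y \<in> coset j"
  shows "(\<Sum>x\<in>coset r. \<zeta> ^ (x * y)) = \<eta> (r + j)"
proof -
  have "(\<Sum>x\<in>coset r. \<zeta> ^ (x * y)) = (\<Sum>x\<in>coset r. \<zeta> ^ (y * x mod p))"
    by (simp add: zeta_power_mod mult.commute)
  also have "\<dots> = (\<Sum>t\<in>coset ((j + r) mod d). \<zeta> ^ t)"
    using sum.reindex_bij_betw[OF bij_betw_mult_coset[OF assms(2,1,3)]] .
  finally show ?thesis
    by (simp add: eta_eq_sum_coset add.commute)
qed

lemma eta_mult:
  assumes "s < d"
  shows "\<eta> i * \<eta> (i + s)
    = of_nat f * kdelta neg_one_class s + (\<Sum>j<d. of_nat (cyc p w d f s j) * \<eta> (i + j))"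
proof -
  define a where "a = i mod d"
  have a: "a < d"
    using d_pos by (simp add: a_def)
  have eta_shift: "\<eta> (a + j) = \<eta> (i + j)" for j
    by (simp add: eta_def a_def mod_add_left_eq)
  define g where "g t = (\<Sum>x\<in>coset a. \<zeta> ^ (x * (1 + t)))" for t
  have "\<eta> i * \<eta> (i + s) = (\<Sum>x\<in>coset a. \<zeta> ^ x * \<eta> (a + s))"
    by (simp add: eta_eq_sum_coset[of i] a_def[symmetric] eta_shift sum_distrib_right)
  also have "\<dots> = (\<Sum>x\<in>coset a. \<Sum>t\<in>coset s. \<zeta> ^ x * \<zeta> ^ (t * x))"
    using sum_coset_times[OF assms a] by (intro sum.cong refl) (simp add: add.commute flip: sum_distrib_left)
  also have "\<dots> = (\<Sum>t\<in>coset s. g t)"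
    by (subst sum.swap) (simp add: g_def power_add[symmetric] algebra_simps)
  also have "\<dots> = (if p - 1 \<in> coset s then g (p - 1) else 0) + (\<Sum>t\<in>coset s - {p - 1}. g t)"
    by (simp add: sum_diff1)
  also have "g (p - 1) = of_nat f"
  proof -
    have "\<zeta> ^ (x * p) = 1" for x
      by (metis mult.commute power_mult power_one zeta_pow_p)
    then show ?thesis
      using p_gt_2 a by (simp add: g_def card_coset)
  qed
  also have "(\<Sum>t\<in>coset s - {p - 1}. g t) = (\<Sum>j<d. \<Sum>t\<in>cyc_set s j. g t)"
    unfolding coset_minus_neg_one_eq[OF assms] using cyc_sets_disjoint by (intro sum.UNION_disjoint) auto
  also have "\<dots> = (\<Sum>j<d. of_nat (cyc p w d f s j) * \<eta> (i + j))"
  proof (rule sum.cong[OF refl])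
    fix j assume "j \<in> {..<d}"
    have "g t = \<eta> (i + j)" if "t \<in> cyc_set s j" for t
    proof -
      have "\<zeta> ^ (x * ((1 + t) mod p)) = \<zeta> ^ (x * (1 + t))" for x
        by (metis mod_mult_right_eq zeta_power_mod)
      then have "g t = (\<Sum>x\<in>coset a. \<zeta> ^ (x * ((1 + t) mod p)))"
        by (simp add: g_def)
      also have "\<dots> = \<eta> (i + j)"
        using that \<open>j \<in> {..<d}\<close> a by (simp add: cyc_set_def sum_coset_times eta_shift)
      finally show ?thesis .
    qed
    then show "(\<Sum>t\<in>cyc_set s j. g t) = of_nat (cyc p w d f s j) * \<eta> (i + j)"
      using assms \<open>j \<in> {..<d}\<close> by (simp add: cyc_eq_card_cyc_set)
  qed
  finally show ?thesis
    using assms neg_one_mem_coset_iff by (simp add: kdelta_def eq_commute)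
qed

lemma sum_cyc_matrix_row:
  assumes "v < d"
  shows "(\<Sum>j<d. cyc_matrix v j) = of_nat f - kdelta neg_one_class v"
proof -
  have "of_nat ((\<Sum>j<d. cyc p w d f v j) + (if v = neg_one_class then 1 else 0)) = (of_nat f :: complex)"
    using sum_cyc_row[OF assms] by metis
  then show ?thesis
    by (auto simp: kdelta_def algebra_simps)
qed

lemma nsum_Suc:
  assumes "v < d"
  shows "nsum \<zeta> w d f (Suc k) v
    = of_nat f * kdelta neg_one_class v * (\<Sum>i<d. \<eta> i ^ k) + mat_vec d cyc_matrix (nsum \<zeta> w d f k) v"
proof -
  have "nsum \<zeta> w d f (Suc k) v = (\<Sum>i<d. \<eta> i ^ k * (\<eta> i * \<eta> (i + v)))"
    by (simp add: nsum_def mult_ac)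
  also have "\<dots> = (\<Sum>i<d. of_nat f * kdelta neg_one_class v * \<eta> i ^ k
                     + (\<Sum>j<d. cyc_matrix v j * (\<eta> i ^ k * \<eta> (i + j))))"
    by (simp add: eta_mult[OF assms] algebra_simps sum_distrib_left)
  also have "\<dots> = of_nat f * kdelta neg_one_class v * (\<Sum>i<d. \<eta> i ^ k)
                  + (\<Sum>i<d. \<Sum>j<d. cyc_matrix v j * (\<eta> i ^ k * \<eta> (i + j)))"
    by (simp add: sum.distrib sum_distrib_left)
  also have "(\<Sum>i<d. \<Sum>j<d. cyc_matrix v j * (\<eta> i ^ k * \<eta> (i + j)))
      = mat_vec d cyc_matrix (nsum \<zeta> w d f k) v"
    unfolding mat_vec_def nsum_def sum_distrib_left by (rule sum.swap)
  finally show ?thesis .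
qed

definition shifted_nsum :: "nat \<Rightarrow> nat \<Rightarrow> complex" where
  "shifted_nsum k v = nsum \<zeta> w d f k v + of_nat f ^ k"

lemma shifted_nsum_0: "shifted_nsum 0 v = 0"
  using sum_eta[of v] by (simp add: shifted_nsum_def nsum_def)

lemma shifted_nsum_1:
  assumes "v < d"
  shows "shifted_nsum 1 v = of_nat p * kdelta neg_one_class v"
proof -
  have "nsum \<zeta> w d f 1 v = of_nat f * kdelta neg_one_class v * of_nat d - (\<Sum>j<d. cyc_matrix v j)"
    using nsum_Suc[OF assms, of 0] sum_eta
    by (simp add: mat_vec_def nsum_def sum_negf)
  moreover have "(of_nat p :: complex) = of_nat d * of_nat f + 1"
    by (simp add: p_eq)
  ultimately show ?thesis
    by (simp add: shifted_nsum_def sum_cyc_matrix_row[OF assms] algebra_simps)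
qed

lemma shifted_nsum_rec:
  assumes "v < d"
  shows "shifted_nsum (k + 2) v
    = mat_vec d cyc_matrix (shifted_nsum (k + 1)) v + of_nat f * shifted_nsum k 0 * kdelta neg_one_class v"
proof -
  have "(\<Sum>i<d. \<eta> i ^ Suc k) = nsum \<zeta> w d f k 0"
    by (simp add: nsum_def mult_ac)
  then have "nsum \<zeta> w d f (k + 2) v
      = of_nat f * kdelta neg_one_class v * nsum \<zeta> w d f k 0 + mat_vec d cyc_matrix (nsum \<zeta> w d f (k + 1)) v"
    using nsum_Suc[OF assms, of "Suc k"] by (simp add: numeral_2_eq_2)
  moreover have "mat_vec d cyc_matrix (shifted_nsum (k + 1)) v
      = mat_vec d cyc_matrix (nsum \<zeta> w d f (k + 1)) v + (\<Sum>j<d. cyc_matrix v j) * of_nat f ^ (k + 1)"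
    by (simp only: mat_vec_def shifted_nsum_def distrib_left sum.distrib sum_distrib_right)
  ultimately show ?thesis
    by (simp add: shifted_nsum_def sum_cyc_matrix_row[OF assms] algebra_simps power2_eq_square)
qed

theorem shifted_nsum_renewal:
  assumes "v < d"
  shows "shifted_nsum (Suc n) v = of_nat p * (mat_vec d cyc_matrix ^^ n) (kdelta neg_one_class) v
    + of_nat f * (\<Sum>i<n. (mat_vec d cyc_matrix ^^ i) (kdelta neg_one_class) 0 * shifted_nsum (n - 1 - i) v)"
  using d_pos shifted_nsum_0 shifted_nsum_1 shifted_nsum_rec assms by (rule lin_rec_renewal)

lemma shifted_nsum_2:
  assumes "v < d"
  shows "shifted_nsum 2 v = of_nat p * cyc_matrix v neg_one_class"
  using shifted_nsum_renewal[OF assms, of 1] chain_eq_mat_vec_power[of 0 v]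
  by (simp add: shifted_nsum_0 numeral_2_eq_2)

lemma shifted_nsum_expansion:
  assumes "3 \<le> k" "v < d"
  shows "shifted_nsum k v = of_nat p * of_nat (chain p w d f (k - 2) v neg_one_class)
    + of_nat f * kdelta neg_one_class 0 * shifted_nsum (k - 2) v
    + of_nat f * cyc_matrix 0 neg_one_class * shifted_nsum (k - 3) v
    + (\<Sum>j=4..k-1. of_nat f * of_nat (chain p w d f (j - 3) 0 neg_one_class) * shifted_nsum (k - j) v)"
proof -
  define q where "q = k - 3"
  then have k: "k = q + 3"
    using assms(1) by simp
  let ?A = "\<lambda>i. (mat_vec d cyc_matrix ^^ i) (kdelta neg_one_class) 0"
  define h where "h j = of_nat f * of_nat (chain p w d f (j - 3) 0 neg_one_class) * shifted_nsum (k - j) v" for j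
  have head: "(\<Sum>i<q + 2. ?A i * shifted_nsum (q + 1 - i) v)
      = kdelta neg_one_class 0 * shifted_nsum (q + 1) v + cyc_matrix 0 neg_one_class * shifted_nsum q v
        + (\<Sum>i<q. ?A (i + 2) * shifted_nsum (q - 1 - i) v)"
    using chain_eq_mat_vec_power[of 0 0] unfolding add_2_eq_Suc' sum.lessThan_Suc_shift by simp
  have "of_nat f * (\<Sum>i<q. ?A (i + 2) * shifted_nsum (q - 1 - i) v) = (\<Sum>i<q. h (i + 4))"
    by (simp add: h_def k sum_distrib_left chain_eq_mat_vec_power numeral_eq_Suc mult_ac del: chain.simps)
  also have "\<dots> = sum h {4..<k + 1}"
    using sum.shift_bounds_nat_ivl[of h 0 4 q] by (simp add: k atLeast0LessThan add.commute)
  also have "\<dots> = sum h {4..<k}"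
  proof (cases "4 \<le> k")
    case True
    moreover have "h k = 0"
      by (simp add: h_def shifted_nsum_0)
    ultimately show ?thesis
      by (simp add: sum.atLeastLessThan_Suc)
  qed (use k in simp)
  also have "{4..<k} = {4..k - 1}"
    using k by auto
  finally have tail: "of_nat f * (\<Sum>i<q. ?A (i + 2) * shifted_nsum (q - 1 - i) v) = sum h {4..k - 1}" .
  have renewal: "shifted_nsum k v = of_nat p * (mat_vec d cyc_matrix ^^ (q + 2)) (kdelta neg_one_class) v
      + of_nat f * (\<Sum>i<q + 2. ?A i * shifted_nsum (q + 1 - i) v)"
    using shifted_nsum_renewal[OF assms(2), of "q + 2"] by (simp add: k numeral_eq_Suc)
  have "(mat_vec d cyc_matrix ^^ (q + 2)) (kdelta neg_one_class) v = of_nat (chain p w d f (k - 2) v neg_one_class)"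
    using chain_eq_mat_vec_power[of "q + 1" v] by (simp add: k numeral_eq_Suc del: chain.simps)
  then show ?thesis
    unfolding renewal head distrib_left tail by (simp add: k h_def)
qed

end

theorem lemma2:
  fixes p d f \<omega> \<theta> :: nat and \<zeta> :: complex
  assumes "prime p" and "p > 2" and "d \<ge> 2" and "d dvd p - 1"
    and "f = (p - 1) div d"
    and "ord p \<omega> = p - 1"
    and "\<theta> = (if even f then 0 else d div 2)"
    and "\<zeta> ^ p = 1" and "\<forall>k. 0 < k \<and> k < p \<longrightarrow> \<zeta> ^ k \<noteq> 1"
  shows "\<forall>\<nu><d.
    let n = (\<lambda>k. nsum \<zeta> \<omega> d f k \<nu>);
        C = (\<lambda>i j. of_nat (cyc p \<omega> d f i j) :: complex);
        F = (of_nat f :: complex);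
        P = (of_nat p :: complex)
    in n 1 + F = P * kdelta \<theta> \<nu>
     \<and> n 2 + F ^ 2 = P * C \<nu> \<theta>
     \<and> n 3 + F ^ 3 = P * (\<Sum>i<d. C \<nu> i * C i \<theta>) + F * kdelta \<theta> 0 * (n 1 + F)
     \<and> n 4 + F ^ 4 = P * (\<Sum>i<d. \<Sum>j<d. C \<nu> i * C i j * C j \<theta>)
                      + F * kdelta \<theta> 0 * (n 2 + F ^ 2) + F * C 0 \<theta> * (n 1 + F)
     \<and> (\<forall>k\<ge>5. n k + F ^ k =
            P * of_nat (chain p \<omega> d f (k - 2) \<nu> \<theta>)
          + F * kdelta \<theta> 0 * (n (k - 2) + F ^ (k - 2))
          + F * C 0 \<theta> * (n (k - 3) + F ^ (k - 3))
          + (\<Sum>j=4..k-1. F * of_nat (chain p \<omega> d f (j - 3) 0 \<theta>) * (n (k - j) + F ^ (k - j))))"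
proof -
  interpret gaussian_periods p \<omega> d f \<zeta>
    using assms by unfold_locales (auto simp: less_le_trans[of 0 2 d] elim: allE[of _ 1])
  have \<theta>: "\<theta> = neg_one_class"
    using assms(7) by (simp add: neg_one_class_eq)
  have n_eq: "nsum \<zeta> \<omega> d f k \<nu> + of_nat f ^ k = shifted_nsum k \<nu>" for k \<nu>
    by (simp add: shifted_nsum_def)
  have n1_eq: "nsum \<zeta> \<omega> d f 1 \<nu> + of_nat f = shifted_nsum 1 \<nu>" for \<nu>
    by (simp add: shifted_nsum_def)
  show ?thesis
    unfolding Let_def n_eq n1_eq \<theta>
    using shifted_nsum_0 shifted_nsum_1 shifted_nsum_2
      shifted_nsum_expansion[of 3] shifted_nsum_expansion[of 4] shifted_nsum_expansion
    by (intro allI impI conjI) (simp_all add: numeral_2_eq_2 sum_distrib_left mult_ac)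
qed

end
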